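(* Let $S$ be a finite set of points in the plane and let $\mathcal{F}$ be the family of halfplanes. Then the Delaunay-edges of $S$ with respect to $\mathcal{F}$ can be $2$-colored such that every halfplane that contains at least three Delaunay-edges contains two Delaunay-edges of different colors. Moreover, this statement is false if "three" is replaced by "two": there is a finite point set $S$ in the plane such that for every $2$-coloring of its Delaunay-edges with respect to halfplanes, some halfplane contains at least two Delaunay-edges, all of the same color.
   Context: For a finite point set $S$ and a family of regions $\mathcal{F}$, the Delaunay-edges of $S$ with respect to $\mathcal{F}$ are the $2$-element subsets $\{p,q\}\subseteq S$ for which there is $F\in\mathcal{F}$ with $S\cap F=\{p,q\}$. A region contains a Delaunay-edge if it contains both of its endpoints. *)

theory Defs
  imports Main "HOL.Real"
begin

type_synonym point = "real \<times> real"

definition halfplane :: "point set \<Rightarrow> bool" where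
  "halfplane H \<longleftrightarrow> (\<exists>a b c. (a, b) \<noteq> (0::real, 0::real) \<and>
       H = {p. a * fst p + b * snd p \<le> c})"

definition delaunay_edges :: "'a set set \<Rightarrow> 'a set \<Rightarrow> 'a set set" where
  "delaunay_edges F S = {e. \<exists>p q. p \<noteq> q \<and> e = {p, q} \<and> e \<subseteq> S \<and> (\<exists>R\<in>F. S \<inter> R = e)}"

definition halfplanes :: "point set set" where
  "halfplanes = {H. halfplane H}"

end

theory Submission
  imports Defs Complex_Main
begin

text \<open>
  For every Delaunay edge \<open>e\<close> of \<open>S\<close> with respect to halfplanes there is an angle \<open>t\<close> such
  that the two points of \<open>e\<close> are strictly the highest points of \<open>S\<close> in direction \<open>t\<close>. Fix such an angle
  \<open>\<theta> e \<in> [0, 2\<pi>)\<close> for every edge and colour the edges by the parity of the rank of \<open>\<theta> e\<close>.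
  Let \<open>H\<close> be a halfplane with inward direction \<open>t\<close>. If an edge inside \<open>H\<close> is on top at an angle
  \<open>k\<close> with \<open>|k - t| < \<pi>\<close>, then every edge on top at an angle between \<open>t\<close> and \<open>k\<close> lies in \<open>H\<close>
  too, because a sinusoid that is positive at two angles less than \<open>\<pi>\<close> apart is positive in
  between. Hence the angles of edges inside and outside \<open>H\<close> cannot alternate around the circle,
  so if \<open>H\<close> contains at least three edges, two of them are adjacent in the order of angles and
  get different colours.

  For the second part, take a convex pentagon: its sides are Delaunay edges, its diagonals are
  not, a halfplane cutting off three consecutive vertices contains exactly two consecutive
  sides, and the 5-cycle of sides has no proper 2-colouring.
\<close>

definition height :: "real \<Rightarrow> point \<Rightarrow> real" where
  "height t p = cos t * fst p + sin t * snd p"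

definition top_pair :: "point set \<Rightarrow> real \<Rightarrow> point set \<Rightarrow> bool" where
  "top_pair S t e \<longleftrightarrow> card e = 2 \<and> e \<subseteq> S \<and> (\<forall>p\<in>e. \<forall>r\<in>S - e. height t r < height t p)"

definition inward_direction :: "real \<Rightarrow> point set \<Rightarrow> bool" where
  "inward_direction t H \<longleftrightarrow> (\<forall>p\<in>H. \<forall>r. r \<notin> H \<longrightarrow> height t r < height t p)"

lemma height_periodic: "height (t + 2 * pi * of_int m) p = height t p"
  by (simp add: height_def cos_add sin_add)

lemma top_pair_periodic: "top_pair S (t + 2 * pi * of_int m) e \<longleftrightarrow> top_pair S t e"
  by (simp add: top_pair_def height_periodic)

lemma sinusoid_pos_between:
  fixes A B a b \<gamma> :: real
  assumes "a \<le> \<gamma>" "\<gamma> \<le> b" "b - a < pi"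
    and "0 < A * cos a + B * sin a" "0 < A * cos b + B * sin b"
  shows "0 < A * cos \<gamma> + B * sin \<gamma>"
proof (cases "\<gamma> = a")
  case False
  then have "0 < sin (b - a)" "0 < sin (\<gamma> - a)" "0 \<le> sin (b - \<gamma>)"
    using assms by (intro sin_gt_zero sin_ge_zero; simp)+
  moreover have "sin (b - a) * (A * cos \<gamma> + B * sin \<gamma>) =
      sin (b - \<gamma>) * (A * cos a + B * sin a) + sin (\<gamma> - a) * (A * cos b + B * sin b)"
    by (simp add: sin_diff algebra_simps)
  ultimately show ?thesis
    using assms by (metis add_nonneg_pos mult_nonneg_nonneg mult_pos_pos less_imp_le zero_less_mult_pos)
qed (use assms in simp)

lemma height_less_between:
  assumes "a \<le> \<gamma>" "\<gamma> \<le> b" "b - a < pi"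
    and "height a x < height a p" "height b x < height b p"
  shows "height \<gamma> x < height \<gamma> p"
proof -
  have diff: "height s p - height s x = (fst p - fst x) * cos s + (snd p - snd x) * sin s" for s
    by (simp add: height_def algebra_simps)
  show ?thesis
    using sinusoid_pos_between[OF assms(1-3), of "fst p - fst x" "snd p - snd x"] assms(4,5)
    unfolding diff[symmetric] by simp
qed

lemma top_pair_unique:
  assumes e: "top_pair S t e" and f: "top_pair S t f"
  shows "e = f"
proof (rule ccontr)
  assume "e \<noteq> f"
  have "finite e" "finite f" "card e = card f"
    using e f unfolding top_pair_def by (auto intro: card_ge_0_finite)
  then have "\<not> e \<subseteq> f" "\<not> f \<subseteq> e"
    using \<open>e \<noteq> f\<close> card_subset_eq by metis+
  then obtain x y where "x \<in> e" "x \<notin> f" "y \<in> f" "y \<notin> e"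
    by blast
  then show False
    using e f unfolding top_pair_def by (metis Diff_iff less_asym subsetD)
qed

lemma halfplane_inward_direction:
  assumes "halfplane H"
  obtains t where "0 \<le> t" "t < 2 * pi" "inward_direction t H"
proof -
  obtain a b c where ab: "(a, b) \<noteq> (0, 0)" and H: "H = {p. a * fst p + b * snd p \<le> c}"
    using assms unfolding halfplane_def by blast
  define n where "n = sqrt (a\<^sup>2 + b\<^sup>2)"
  have "0 < a\<^sup>2 + b\<^sup>2"
    using ab by (auto simp: sum_power2_gt_zero_iff)
  then have n: "0 < n" "n\<^sup>2 = a\<^sup>2 + b\<^sup>2"
    unfolding n_def by auto
  then have "(- a / n)\<^sup>2 + (- b / n)\<^sup>2 = 1"
    using ab by (simp add: power_divide add_divide_distrib[symmetric])
  then obtain t where t: "0 \<le> t" "t < 2 * pi" "- a / n = cos t" "- b / n = sin t"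
    using sincos_total_2pi by blast
  have "height t x = - (a * fst x + b * snd x) / n" for x
    unfolding height_def t(3,4)[symmetric] using n(1) by (simp add: field_simps)
  then have "inward_direction t H"
    using n(1) unfolding inward_direction_def H by (auto simp: divide_strict_right_mono)
  with t(1,2) show ?thesis
    using that by blast
qed

lemma delaunay_edge_top_pair:
  assumes "e \<in> delaunay_edges halfplanes S"
  shows "\<exists>t. 0 \<le> t \<and> t < 2 * pi \<and> top_pair S t e"
proof -
  obtain p q R where e: "p \<noteq> q" "e = {p, q}" "R \<in> halfplanes" "S \<inter> R = e"
    using assms unfolding delaunay_edges_def by blast
  obtain t where t: "0 \<le> t" "t < 2 * pi" "inward_direction t R"
    using halfplane_inward_direction e(3) unfolding halfplanes_def by blast
  have "top_pair S t e"
    using e t(3) unfolding top_pair_def inward_direction_def by auto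
  with t(1,2) show ?thesis
    by blast
qed

definition edge_angle :: "point set \<Rightarrow> point set \<Rightarrow> real" where
  "edge_angle S e = (SOME t. 0 \<le> t \<and> t < 2 * pi \<and> top_pair S t e)"

lemma edge_angle:
  assumes "e \<in> delaunay_edges halfplanes S"
  shows "0 \<le> edge_angle S e" "edge_angle S e < 2 * pi" "top_pair S (edge_angle S e) e"
  using someI_ex[OF delaunay_edge_top_pair[OF assms]] unfolding edge_angle_def by blast+

lemma inj_on_edge_angle: "inj_on (edge_angle S) (delaunay_edges halfplanes S)"
  by (metis edge_angle(3) inj_onI top_pair_unique)

lemma top_pair_subset_between:
  assumes H: "inward_direction t H" and g: "top_pair S k g" "g \<subseteq> H"
    and near: "\<bar>k - t\<bar> < pi" and \<gamma>: "min t k \<le> \<gamma>" "\<gamma> \<le> max t k"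
    and h: "top_pair S \<gamma> h"
  shows "h \<subseteq> H"
proof (rule ccontr)
  assume "\<not> h \<subseteq> H"
  then obtain x where x: "x \<in> h" "x \<notin> H" and "x \<in> S"
    using h unfolding top_pair_def by blast
  have above_x: "height \<gamma> x < height \<gamma> p" if "p \<in> g" for p
  proof -
    have "height t x < height t p"
      using H g(2) that x(2) unfolding inward_direction_def by blast
    moreover have "height k x < height k p"
      using g that x(2) \<open>x \<in> S\<close> unfolding top_pair_def by blast
    ultimately show ?thesis
      using height_less_between[OF \<gamma>, of x p] near by (cases "t \<le> k") (auto simp: min_def max_def)
  qed
  have "g \<subseteq> h"
  proof
    fix p assume "p \<in> g"
    show "p \<in> h"
    proof (rule ccontr)
      assume "p \<notin> h"
      then have "height \<gamma> p < height \<gamma> x"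
        using h x(1) \<open>p \<in> g\<close> g(1) unfolding top_pair_def by blast
      with above_x[OF \<open>p \<in> g\<close>] show False
        by simp
    qed
  qed
  moreover have "finite h" "card g = card h"
    using g(1) h unfolding top_pair_def by (auto intro: card_ge_0_finite)
  ultimately have "g = h"
    using card_subset_eq by blast
  with x g(2) show False
    by blast
qed

lemma top_pair_shift_near:
  assumes H: "inward_direction t H" and g: "top_pair S k g" "g \<subseteq> H"
    and r: "r \<in> S" "r \<notin> H"
  obtains m :: int where "\<bar>k + 2 * pi * m - t\<bar> < pi"
proof -
  define m where "m = \<lfloor>(t - k + pi) / (2 * pi)\<rfloor>"
  have "m \<le> (t - k + pi) / (2 * pi)" "(t - k + pi) / (2 * pi) < m + 1"
    unfolding m_def by linarith+
  then have bounds: "- pi < k + 2 * pi * m - t" "k + 2 * pi * m - t \<le> pi"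
    by (simp_all add: field_simps)
  txt \<open>At the antipodal angle all heights are negated, so \<open>g\<close> cannot be above \<open>r\<close> there.\<close>
  have "k + 2 * pi * m - t \<noteq> pi"
  proof
    assume "k + 2 * pi * m - t = pi"
    then have antipodal: "k + 2 * pi * m = t + pi"
      by simp
    obtain p where "p \<in> g"
      using g(1) unfolding top_pair_def card_2_iff by blast
    have "height t r < height t p"
      using H g(2) \<open>p \<in> g\<close> r(2) unfolding inward_direction_def by blast
    moreover have "height k r < height k p"
      using g \<open>p \<in> g\<close> r unfolding top_pair_def by blast
    moreover have "height k y = - height t y" for y
      using height_periodic[of k m y] unfolding antipodal by (simp add: height_def)
    ultimately show False
      by simp
  qed
  with bounds have "\<bar>k + 2 * pi * m - t\<bar> < pi"
    by linarith
  then show ?thesis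
    by (rule that)
qed

lemma inward_direction_in_gap:
  assumes H: "inward_direction t H" and g: "top_pair S k g" "g \<subseteq> H"
    and h1: "top_pair S o1 h1" "\<not> h1 \<subseteq> H" and h2: "top_pair S o2 h2" "\<not> h2 \<subseteq> H"
    and "o1 < k" "k < o2"
  obtains m :: int where "o1 + 2 * pi * m < t" "t < o2 + 2 * pi * m"
proof -
  obtain r where "r \<in> S" "r \<notin> H"
    using h1 unfolding top_pair_def by blast
  then obtain m :: int where near: "\<bar>k + 2 * pi * m - t\<bar> < pi"
    using top_pair_shift_near[OF H g] by blast
  have g': "top_pair S (k + 2 * pi * m) g"
    using g(1) top_pair_periodic by blast
  have outside: "a + 2 * pi * m \<notin> {min t (k + 2 * pi * m)..max t (k + 2 * pi * m)}"
    if "top_pair S a h" "\<not> h \<subseteq> H" for a h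
    using top_pair_subset_between[OF H g' g(2)] near that top_pair_periodic[of S a m h]
    by (auto simp: algebra_simps)
  have "o1 + 2 * pi * m < t \<and> t < o2 + 2 * pi * m"
    using outside[OF h1] outside[OF h2] \<open>o1 < k\<close> \<open>k < o2\<close> by auto
  then show ?thesis
    using that by blast
qed

lemma no_alternating_top_pairs:
  assumes "halfplane H"
    and g1: "top_pair S k1 g1" "g1 \<subseteq> H" and g2: "top_pair S k2 g2" "g2 \<subseteq> H"
    and h1: "top_pair S o1 h1" "\<not> h1 \<subseteq> H" and h2: "top_pair S o2 h2" "\<not> h2 \<subseteq> H"
    and "k1 < o1" "o1 < k2" "k2 < o2" "o2 < k1 + 2 * pi"
  shows False
proof -
  txt \<open>Modulo \<open>2\<pi>\<close>, \<open>t\<close> would have to lie both in the gap \<open>(o1, o2)\<close> around \<open>k2\<close> and in the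
    gap \<open>(o2 - 2\<pi>, o1)\<close> around \<open>k1\<close>.\<close>
  obtain t where H: "inward_direction t H"
    using halfplane_inward_direction[OF assms(1)] by blast
  obtain m :: int where m: "o1 + 2 * pi * m < t" "t < o2 + 2 * pi * m"
    using inward_direction_in_gap[OF H g2 h1 h2] assms by blast
  have "top_pair S (o2 - 2 * pi) h2"
    using top_pair_periodic[of S "o2 - 2 * pi" 1 h2] h2(1) by simp
  moreover have "o2 - 2 * pi < k1"
    using assms by simp
  ultimately obtain n :: int where n: "o2 - 2 * pi + 2 * pi * n < t" "t < o1 + 2 * pi * n"
    using inward_direction_in_gap[OF H g1 _ h2(2) h1] \<open>k1 < o1\<close> by blast
  have "2 * pi * m < 2 * pi * n" "2 * pi * (n - 1) < 2 * pi * m"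
    using m n by (linarith, simp add: algebra_simps)
  then have "m < n" "n - 1 < m"
    by simp_all
  then show False
    by linarith
qed

lemma card_less_of_adjacent:
  fixes K :: "'a::linorder set"
  assumes "finite K" "a \<in> K" "a < b" "\<forall>x\<in>K. \<not> (a < x \<and> x < b)"
  shows "card {x \<in> K. x < b} = Suc (card {x \<in> K. x < a})"
proof -
  have "{x \<in> K. x < b} = insert a {x \<in> K. x < a}"
    using assms(2-4) by (auto simp: not_less)
  then show ?thesis
    using assms(1) by simp
qed

lemma exists_adjacent_pair:
  fixes K :: "'a::linorder set"
  assumes "finite K" "J \<subseteq> K" "3 \<le> card J"
    and no_alternation: "\<And>a x b y. a \<in> J \<Longrightarrow> b \<in> J \<Longrightarrow> x \<in> K - J \<Longrightarrow> y \<in> K - J \<Longrightarrow>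
      a < x \<Longrightarrow> x < b \<Longrightarrow> b < y \<Longrightarrow> False"
  obtains a b where "a \<in> J" "b \<in> J" "a < b" "\<forall>x\<in>K. \<not> (a < x \<and> x < b)"
proof -
  have "finite J"
    using assms(1,2) finite_subset by blast
  define a where "a = Min J"
  define b where "b = Min (J - {a})"
  define c where "c = Min (J - {a, b})"
  have "card {a, b} \<le> 2"
    by (simp add: card_insert_if)
  then have "J - {a, b} \<noteq> {}"
    using assms(3) card_mono[of "{a, b}" J] by auto
  then have "J \<noteq> {}" "J - {a} \<noteq> {}"
    by blast+
  have "finite (J - {a})" "finite (J - {a, b})"
    using \<open>finite J\<close> by simp_all
  have a: "a \<in> J"
    unfolding a_def using \<open>finite J\<close> \<open>J \<noteq> {}\<close> by (rule Min_in)
  have a_min: "a \<le> x" if "x \<in> J" for x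
    unfolding a_def using \<open>finite J\<close> that by (rule Min_le)
  have b: "b \<in> J - {a}"
    unfolding b_def using \<open>finite (J - {a})\<close> \<open>J - {a} \<noteq> {}\<close> by (rule Min_in)
  have b_min: "b \<le> x" if "x \<in> J - {a}" for x
    unfolding b_def using \<open>finite (J - {a})\<close> that by (rule Min_le)
  have c: "c \<in> J - {a, b}"
    unfolding c_def using \<open>finite (J - {a, b})\<close> \<open>J - {a, b} \<noteq> {}\<close> by (rule Min_in)
  have c_min: "c \<le> x" if "x \<in> J - {a, b}" for x
    unfolding c_def using \<open>finite (J - {a, b})\<close> that by (rule Min_le)
  have "a < b" "b < c"
    using a_min[of b] b_min[of c] b c by auto
  have gap_ab: "x \<notin> J" if "a < x" "x < b" for x
    using b_min[of x] that by force
  have gap_bc: "y \<notin> J" if "b < y" "y < c" for y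
    using c_min[of y] that \<open>a < b\<close> by force
  show ?thesis
  proof (cases "\<exists>x\<in>K. a < x \<and> x < b")
    case True
    then obtain x where x: "x \<in> K - J" "a < x" "x < b"
      using gap_ab by blast
    show ?thesis
    proof (cases "\<exists>y\<in>K. b < y \<and> y < c")
      case True
      then obtain y where "y \<in> K - J" "b < y"
        using gap_bc by blast
      then show ?thesis
        using no_alternation[OF a _ x(1) _ x(2,3)] b by blast
    next
      case False
      then show ?thesis
        using that b c \<open>b < c\<close> by blast
    qed
  next
    case False
    then show ?thesis
      using that a b \<open>a < b\<close> by blast
  qed
qed

lemma rank_parity_not_constant:
  fixes \<theta> :: "'b \<Rightarrow> 'a::linorder"
  assumes "finite E" "inj_on \<theta> E" "I \<subseteq> E" "3 \<le> card I"
    and no_alternation: "\<And>g1 g2 h1 h2. g1 \<in> I \<Longrightarrow> g2 \<in> I \<Longrightarrow> h1 \<in> E - I \<Longrightarrow> h2 \<in> E - I \<Longrightarrow>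
      \<theta> g1 < \<theta> h1 \<Longrightarrow> \<theta> h1 < \<theta> g2 \<Longrightarrow> \<theta> g2 < \<theta> h2 \<Longrightarrow> False"
  obtains e f where "e \<in> I" "f \<in> I"
    "even (card {x \<in> \<theta> ` E. x < \<theta> e}) \<noteq> even (card {x \<in> \<theta> ` E. x < \<theta> f})"
proof -
  have "finite (\<theta> ` E)" "\<theta> ` I \<subseteq> \<theta> ` E"
    using assms(1,3) by auto
  moreover have "3 \<le> card (\<theta> ` I)"
    using assms(2-4) by (simp add: card_image inj_on_subset)
  moreover have "\<theta> ` E - \<theta> ` I = \<theta> ` (E - I)"
    using assms(2,3) by (simp add: inj_on_image_set_diff)
  then have "False"
    if members: "a \<in> \<theta> ` I" "b \<in> \<theta> ` I" "x \<in> \<theta> ` E - \<theta> ` I" "y \<in> \<theta> ` E - \<theta> ` I"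
    and order: "a < x" "x < b" "b < y" for a x b y
  proof -
    obtain g1 g2 h1 h2 where edges: "g1 \<in> I" "g2 \<in> I" "h1 \<in> E - I" "h2 \<in> E - I"
      and angles: "a = \<theta> g1" "b = \<theta> g2" "x = \<theta> h1" "y = \<theta> h2"
      using members unfolding \<open>\<theta> ` E - \<theta> ` I = \<theta> ` (E - I)\<close> by (elim imageE) blast
    from order have "\<theta> g1 < \<theta> h1" "\<theta> h1 < \<theta> g2" "\<theta> g2 < \<theta> h2"
      unfolding angles .
    then show False
      by (rule no_alternation[OF edges])
  qed
  ultimately obtain a b where ab: "a \<in> \<theta> ` I" "b \<in> \<theta> ` I" "a < b" "\<forall>x\<in>\<theta> ` E. \<not> (a < x \<and> x < b)"
    by (rule exists_adjacent_pair)
  then obtain e f where "e \<in> I" "f \<in> I" "a = \<theta> e" "b = \<theta> f"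
    by blast
  moreover have "card {x \<in> \<theta> ` E. x < b} = Suc (card {x \<in> \<theta> ` E. x < a})"
    using \<open>finite (\<theta> ` E)\<close> ab(1,3,4) assms(3) by (intro card_less_of_adjacent) blast+
  ultimately have "even (card {x \<in> \<theta> ` E. x < \<theta> e}) \<noteq> even (card {x \<in> \<theta> ` E. x < \<theta> f})"
    by simp
  with \<open>e \<in> I\<close> \<open>f \<in> I\<close> show ?thesis
    by (rule that)
qed

lemma no_alternating_edge_angles:
  fixes S :: "point set"
  defines "E \<equiv> delaunay_edges halfplanes S" and "\<theta> \<equiv> edge_angle S"
  assumes "halfplane H"
    and inside: "g \<in> E" "g \<subseteq> H" "g' \<in> E" "g' \<subseteq> H"
    and outside: "h \<in> E" "\<not> h \<subseteq> H" "h' \<in> E" "\<not> h' \<subseteq> H"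
    and order: "\<theta> g < \<theta> h" "\<theta> h < \<theta> g'" "\<theta> g' < \<theta> h'"
  shows False
proof -
  have top: "top_pair S (\<theta> e) e" if "e \<in> E" for e
    using edge_angle(3) that unfolding E_def \<theta>_def .
  have "0 \<le> \<theta> g" "\<theta> h' < 2 * pi"
    using edge_angle(1) inside(1) edge_angle(2) outside(3) unfolding E_def \<theta>_def by blast+
  then have "\<theta> h' < \<theta> g + 2 * pi"
    by linarith
  with order show False
    by (rule no_alternating_top_pairs[OF \<open>halfplane H\<close> top[OF inside(1)] inside(2) top[OF inside(3)] inside(4)
          top[OF outside(1)] outside(2) top[OF outside(3)] outside(4)])
qed

lemma finite_delaunay_edges: "finite S \<Longrightarrow> finite (delaunay_edges F S)"
  by (rule finite_subset[of _ "Pow S"]) (auto simp: delaunay_edges_def)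

lemma halfplane_delaunay_edges_colouring:
  fixes S :: "point set"
  defines "E \<equiv> delaunay_edges halfplanes S"
  assumes "finite S"
  shows "\<exists>col :: point set \<Rightarrow> bool. \<forall>H. halfplane H \<longrightarrow> card {e \<in> E. e \<subseteq> H} \<ge> 3 \<longrightarrow>
           (\<exists>e1 \<in> E. \<exists>e2 \<in> E. e1 \<subseteq> H \<and> e2 \<subseteq> H \<and> col e1 \<noteq> col e2)"
proof -
  define \<theta> where "\<theta> = edge_angle S"
  define col where "col e = even (card {x \<in> \<theta> ` E. x < \<theta> e})" for e
  have "finite E"
    unfolding E_def using assms(2) by (rule finite_delaunay_edges)
  have "inj_on \<theta> E"
    unfolding E_def \<theta>_def by (rule inj_on_edge_angle)
  have "\<exists>e1 \<in> E. \<exists>e2 \<in> E. e1 \<subseteq> H \<and> e2 \<subseteq> H \<and> col e1 \<noteq> col e2"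
    if hp: "halfplane H" and three: "card {e \<in> E. e \<subseteq> H} \<ge> 3" for H
  proof -
    have no_alternation: False
      if "g1 \<in> {e \<in> E. e \<subseteq> H}" "g2 \<in> {e \<in> E. e \<subseteq> H}"
        "h1 \<in> E - {e \<in> E. e \<subseteq> H}" "h2 \<in> E - {e \<in> E. e \<subseteq> H}"
        and order: "\<theta> g1 < \<theta> h1" "\<theta> h1 < \<theta> g2" "\<theta> g2 < \<theta> h2" for g1 g2 h1 h2
    proof -
      have "g1 \<in> E" "g1 \<subseteq> H" "g2 \<in> E" "g2 \<subseteq> H" "h1 \<in> E" "\<not> h1 \<subseteq> H" "h2 \<in> E" "\<not> h2 \<subseteq> H"
        using that(1-4) by blast+
      from hp this order show False
        unfolding E_def \<theta>_def by (rule no_alternating_edge_angles)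
    qed
    have "{e \<in> E. e \<subseteq> H} \<subseteq> E"
      by blast
    then obtain e f where "e \<in> {e \<in> E. e \<subseteq> H}" "f \<in> {e \<in> E. e \<subseteq> H}"
      "even (card {x \<in> \<theta> ` E. x < \<theta> e}) \<noteq> even (card {x \<in> \<theta> ` E. x < \<theta> f})"
      by (rule rank_parity_not_constant[OF \<open>finite E\<close> \<open>inj_on \<theta> E\<close> _ three no_alternation])
    then have "e \<in> E" "e \<subseteq> H" "f \<in> E" "f \<subseteq> H" "col e \<noteq> col f"
      unfolding col_def by simp_all
    then show ?thesis
      by blast
  qed
  then show ?thesis
    by blast
qed

lemma halfplaneI: "(a, b) \<noteq> (0, 0) \<Longrightarrow> halfplane {p. a * fst p + b * snd p \<le> c}"
  unfolding halfplane_def by blast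

lemma delaunay_edgeI:
  assumes "(a, b) \<noteq> (0, 0)" "S \<inter> {p. a * fst p + b * snd p \<le> c} = {p, q}" "p \<noteq> q"
  shows "{p, q} \<in> delaunay_edges halfplanes S"
proof -
  have "{p. a * fst p + b * snd p \<le> c} \<in> halfplanes"
    unfolding halfplanes_def using assms(1) by (simp add: halfplaneI)
  with assms(2,3) show ?thesis
    unfolding delaunay_edges_def by blast
qed

lemma crossing_not_delaunay_edge:
  assumes crossing: "\<And>H. halfplane H \<Longrightarrow> A \<in> H \<Longrightarrow> C \<in> H \<Longrightarrow> B \<in> H \<or> D \<in> H"
    and "B \<in> S" "D \<in> S" "B \<notin> {A, C}" "D \<notin> {A, C}"
  shows "{A, C} \<notin> delaunay_edges halfplanes S"
proof
  assume "{A, C} \<in> delaunay_edges halfplanes S"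
  then obtain H where "halfplane H" "S \<inter> H = {A, C}"
    unfolding delaunay_edges_def halfplanes_def by blast
  with crossing[of H] assms(2-5) show False
    by blast
qed

lemma monochromatic_halfplane_of_path:
  fixes S :: "point set" and col :: "point set \<Rightarrow> bool"
  defines "E \<equiv> delaunay_edges halfplanes S"
  assumes "halfplane H" and cap: "S \<inter> H = {A, B, C}"
    and "A \<noteq> B" "B \<noteq> C" "A \<noteq> C"
    and path: "{A, B} \<in> E" "{B, C} \<in> E" "{A, C} \<notin> E" and "col {A, B} = col {B, C}"
  shows "\<exists>H. halfplane H \<and> card {e \<in> E. e \<subseteq> H} \<ge> 2 \<and>
           (\<forall>e1 \<in> E. \<forall>e2 \<in> E. e1 \<subseteq> H \<longrightarrow> e2 \<subseteq> H \<longrightarrow> col e1 = col e2)"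
proof -
  have "e \<in> {{A, B}, {B, C}}" if "e \<in> E" "e \<subseteq> H" for e
  proof -
    obtain p q where "p \<noteq> q" "e = {p, q}" "e \<subseteq> S"
      using \<open>e \<in> E\<close> unfolding E_def delaunay_edges_def by blast
    moreover have "p \<in> {A, B, C}" "q \<in> {A, B, C}"
      using calculation \<open>e \<subseteq> H\<close> cap by blast+
    ultimately have "e = {A, B} \<or> e = {B, C} \<or> e = {A, C}"
      by auto
    with \<open>e \<in> E\<close> path(3) show ?thesis
      by blast
  qed
  then have edges_in_H: "{e \<in> E. e \<subseteq> H} = {{A, B}, {B, C}}"
    using cap path(1,2) by blast
  have "{A, B} \<noteq> {B, C}"
    using \<open>A \<noteq> C\<close> by (auto simp: doubleton_eq_iff)
  then have "card {e \<in> E. e \<subseteq> H} \<ge> 2"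
    unfolding edges_in_H by simp
  moreover have "\<forall>e1 \<in> E. \<forall>e2 \<in> E. e1 \<subseteq> H \<longrightarrow> e2 \<subseteq> H \<longrightarrow> col e1 = col e2"
  proof (intro ballI impI)
    fix e1 e2 assume "e1 \<in> E" "e2 \<in> E" "e1 \<subseteq> H" "e2 \<subseteq> H"
    then have "e1 \<in> {{A, B}, {B, C}}" "e2 \<in> {{A, B}, {B, C}}"
      unfolding edges_in_H[symmetric] by blast+
    with \<open>col {A, B} = col {B, C}\<close> show "col e1 = col e2"
      by auto
  qed
  ultimately show ?thesis
    using \<open>halfplane H\<close> by blast
qed

definition pentagon :: "point set" where
  "pentagon = {(0, 0), (2, 0), (3, 2), (1, 3), (-1, 2)}"

lemma pentagon_sides:
  "{(0, 0), (2, 0)} \<in> delaunay_edges halfplanes pentagon"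
  "{(2, 0), (3, 2)} \<in> delaunay_edges halfplanes pentagon"
  "{(3, 2), (1, 3)} \<in> delaunay_edges halfplanes pentagon"
  "{(1, 3), (-1, 2)} \<in> delaunay_edges halfplanes pentagon"
  "{(-1, 2), (0, 0)} \<in> delaunay_edges halfplanes pentagon"
  subgoal by (rule delaunay_edgeI[of 0 1 _ 1]) (auto simp: pentagon_def)
  subgoal by (rule delaunay_edgeI[of "-2" 1 _ "-3"]) (auto simp: pentagon_def)
  subgoal by (rule delaunay_edgeI[of "-1" "-2" _ "-5"]) (auto simp: pentagon_def)
  subgoal by (rule delaunay_edgeI[of 1 "-2" _ "-3"]) (auto simp: pentagon_def)
  subgoal by (rule delaunay_edgeI[of 2 1 _ 1]) (auto simp: pentagon_def)
  done

lemma pentagon_diagonals: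
  "{(0, 0), (3, 2)} \<notin> delaunay_edges halfplanes pentagon"
  "{(2, 0), (1, 3)} \<notin> delaunay_edges halfplanes pentagon"
  "{(3, 2), (-1, 2)} \<notin> delaunay_edges halfplanes pentagon"
  "{(1, 3), (0, 0)} \<notin> delaunay_edges halfplanes pentagon"
  "{(-1, 2), (2, 0)} \<notin> delaunay_edges halfplanes pentagon"
  subgoal by (rule crossing_not_delaunay_edge[where B = "(2, 0)" and D = "(1, 3)"])
      (auto simp: halfplane_def pentagon_def)
  subgoal by (rule crossing_not_delaunay_edge[where B = "(3, 2)" and D = "(-1, 2)"])
      (auto simp: halfplane_def pentagon_def)
  subgoal by (rule crossing_not_delaunay_edge[where B = "(1, 3)" and D = "(0, 0)"])
      (auto simp: halfplane_def pentagon_def)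
  subgoal by (rule crossing_not_delaunay_edge[where B = "(-1, 2)" and D = "(2, 0)"])
      (auto simp: halfplane_def pentagon_def)
  subgoal by (rule crossing_not_delaunay_edge[where B = "(0, 0)" and D = "(3, 2)"])
      (auto simp: halfplane_def pentagon_def)
  done

lemma pentagon_caps:
  "pentagon \<inter> {p. (-1) * fst p + 2 * snd p \<le> 3} = {(0, 0), (2, 0), (3, 2)}"
  "pentagon \<inter> {p. (-2) * fst p + (-1) * snd p \<le> -2} = {(2, 0), (3, 2), (1, 3)}"
  "pentagon \<inter> {p. 0 * fst p + (-1) * snd p \<le> -1} = {(3, 2), (1, 3), (-1, 2)}"
  "pentagon \<inter> {p. 2 * fst p + (-1) * snd p \<le> 2} = {(1, 3), (-1, 2), (0, 0)}"
  "pentagon \<inter> {p. 1 * fst p + 2 * snd p \<le> 5} = {(-1, 2), (0, 0), (2, 0)}"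
  by (auto simp: pentagon_def)

lemma pentagon_no_good_colouring:
  "\<exists>S :: point set. finite S \<and> (\<forall>col :: point set \<Rightarrow> bool. \<exists>H. halfplane H \<and>
     card {e \<in> delaunay_edges halfplanes S. e \<subseteq> H} \<ge> 2 \<and>
     (\<forall>e1 \<in> delaunay_edges halfplanes S. \<forall>e2 \<in> delaunay_edges halfplanes S.
        e1 \<subseteq> H \<longrightarrow> e2 \<subseteq> H \<longrightarrow> col e1 = col e2))"
proof (rule exI[of _ pentagon], intro conjI allI)
  show "finite pentagon"
    by (simp add: pentagon_def)
  fix col :: "point set \<Rightarrow> bool"
  have "col {(0, 0), (2, 0)} = col {(2, 0), (3, 2)} \<or> col {(2, 0), (3, 2)} = col {(3, 2), (1, 3)} \<or>
      col {(3, 2), (1, 3)} = col {(1, 3), (-1, 2)} \<or> col {(1, 3), (-1, 2)} = col {(-1, 2), (0, 0)} \<or>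
      col {(-1, 2), (0, 0)} = col {(0, 0), (2, 0)}"
    by blast
  then show "\<exists>H. halfplane H \<and> card {e \<in> delaunay_edges halfplanes pentagon. e \<subseteq> H} \<ge> 2 \<and>
     (\<forall>e1 \<in> delaunay_edges halfplanes pentagon. \<forall>e2 \<in> delaunay_edges halfplanes pentagon.
        e1 \<subseteq> H \<longrightarrow> e2 \<subseteq> H \<longrightarrow> col e1 = col e2)"
    using monochromatic_halfplane_of_path[OF halfplaneI pentagon_caps(1) _ _ _ pentagon_sides(1,2) pentagon_diagonals(1)]
      monochromatic_halfplane_of_path[OF halfplaneI pentagon_caps(2) _ _ _ pentagon_sides(2,3) pentagon_diagonals(2)]
      monochromatic_halfplane_of_path[OF halfplaneI pentagon_caps(3) _ _ _ pentagon_sides(3,4) pentagon_diagonals(3)]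
      monochromatic_halfplane_of_path[OF halfplaneI pentagon_caps(4) _ _ _ pentagon_sides(4,5) pentagon_diagonals(4)]
      monochromatic_halfplane_of_path[OF halfplaneI pentagon_caps(5) _ _ _ pentagon_sides(5,1) pentagon_diagonals(5)]
    by auto
qed

theorem theorem2:
  shows "(\<forall>S :: point set. finite S \<longrightarrow>
           (\<exists>col :: point set \<Rightarrow> bool.
              \<forall>H. halfplane H \<longrightarrow>
                 card {e \<in> delaunay_edges halfplanes S. e \<subseteq> H} \<ge> 3 \<longrightarrow>
                 (\<exists>e1 \<in> delaunay_edges halfplanes S. \<exists>e2 \<in> delaunay_edges halfplanes S.
                    e1 \<subseteq> H \<and> e2 \<subseteq> H \<and> col e1 \<noteq> col e2)))
       \<and> (\<exists>S :: point set. finite S \<and>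
           (\<forall>col :: point set \<Rightarrow> bool.
              \<exists>H. halfplane H \<and>
                 card {e \<in> delaunay_edges halfplanes S. e \<subseteq> H} \<ge> 2 \<and>
                 (\<forall>e1 \<in> delaunay_edges halfplanes S. \<forall>e2 \<in> delaunay_edges halfplanes S.
                    e1 \<subseteq> H \<longrightarrow> e2 \<subseteq> H \<longrightarrow> col e1 = col e2)))"
  using halfplane_delaunay_edges_colouring pentagon_no_good_colouring by blast

end
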